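(* If $\phi\in C(\mathbb{Z}_p,\mathbb{C}_p)$ and $x,y\in\mathbb{Z}_p$, then $$T^x(\phi)(y)=\int_{\mathbb{Z}_p}(\mathbf 1-\mathbf x)^{\star y}\,d\mu_{\phi,x}=\big((\mathbf 1-\mathbf x)^{\star y}\star\phi\big)(x).$$
   Context: Fix a prime $p$. $\mathbb{C}_p$ denotes the completion of an algebraic closure of $\mathbb{Q}_p$, with absolute value $|\cdot|$ normalized by $|p|=1/p$. $C(\mathbb{Z}_p,\mathbb{C}_p)$ is the $\mathbb{C}_p$-Banach space of continuous functions $\mathbb{Z}_p\to\mathbb{C}_p$ with the sup-norm $\|\cdot\|$. For $n\in\mathbb{Z}_{\ge0}$ and $x\in\mathbb{Z}_p$, $\binom{x}{n}=x(x-1)\cdots(x-n+1)/n!$. For $\phi$ let $(\nabla\phi)(x)=\phi(x+1)-\phi(x)$; every $\phi$ has the Mahler expansion $\phi(x)=\sum_{n\ge0}(\nabla^n\phi)(0)\binom{x}{n}$. The convolution $\phi\star\psi$ is the continuous function with Mahler coefficients $(\nabla^n(\phi\star\psi))(0)=\sum_{k=0}^n\binom nk(\nabla^k\phi)(0)(\nabla^{n-k}\psi)(0)$. For $y\in\mathbb{Z}_p$, $S^y(\phi)(x)=\sum_{k\ge0}(-1)^k k!\binom yk\binom xk\phi(x-k)$; for $x\in\mathbb{Z}_p$, $T^x(\phi)(y)=S^y(\phi)(x)$. $\mathbf 1$ is the constant function $1$, $\mathbf x$ is $x\mapsto x$, and $(\mathbf 1-\mathbf x)^{\star y}:=S^y(\mathbf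 1)$. A measure is a bounded $\mathbb{C}_p$-linear functional on $C(\mathbb{Z}_p,\mathbb{C}_p)$, its value on $\chi$ written $\int_{\mathbb{Z}_p}\chi\,d\mu$; for $\phi\in C(\mathbb{Z}_p,\mathbb{C}_p)$ and $x\in\mathbb{Z}_p$, $\mu_{\phi,x}$ is the measure with $\int_{\mathbb{Z}_p}\chi\,d\mu_{\phi,x}=\sum_{n\ge0}(\nabla^n\chi)(0)\binom{x}{n}\phi(x-n)$. *)

theory Defs
  imports "HOL-Computational_Algebra.Polynomial"
begin

text \<open>
  We model it abstractly: a field 'a of
  characteristic 0 together with a function av (the absolute value) such that
  (av) is a non-archimedean absolute value with av p = 1/p, 'a is complete,
  algebraically closed, and the algebraic numbers are dense.  These properties
  characterise C_p up to isometric isomorphism.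
\<close>

definition abs_value_na :: "('a::field_char_0 \<Rightarrow> real) \<Rightarrow> bool" where
  "abs_value_na av \<longleftrightarrow>
     (\<forall>x. av x \<ge> 0) \<and> (\<forall>x. av x = 0 \<longleftrightarrow> x = 0) \<and>
     (\<forall>x y. av (x * y) = av x * av y) \<and>
     (\<forall>x y. av (x + y) \<le> max (av x) (av y))"

definition cauchy_v :: "('a::field_char_0 \<Rightarrow> real) \<Rightarrow> (nat \<Rightarrow> 'a) \<Rightarrow> bool" where
  "cauchy_v av s \<longleftrightarrow> (\<forall>e>0. \<exists>N. \<forall>m\<ge>N. \<forall>n\<ge>N. av (s m - s n) < e)"

definition lim_v :: "('a::field_char_0 \<Rightarrow> real) \<Rightarrow> (nat \<Rightarrow> 'a) \<Rightarrow> 'a \<Rightarrow> bool" where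
  "lim_v av s l \<longleftrightarrow> (\<forall>e>0. \<exists>N. \<forall>n\<ge>N. av (s n - l) < e)"

definition is_Cp :: "nat \<Rightarrow> ('a::field_char_0 \<Rightarrow> real) \<Rightarrow> bool" where
  "is_Cp p av \<longleftrightarrow>
     prime p \<and> abs_value_na av \<and> av (of_nat p) = 1 / real p \<and>
     (\<forall>s. cauchy_v av s \<longrightarrow> (\<exists>l. lim_v av s l)) \<and>
     (\<forall>q::'a poly. degree q > 0 \<longrightarrow> (\<exists>z. poly q z = 0)) \<and>
     (\<forall>z. \<forall>e>0. \<exists>w. algebraic w \<and> av (w - z) < e)"

definition Zp :: "('a::field_char_0 \<Rightarrow> real) \<Rightarrow> 'a set" where
  "Zp av = {x. \<exists>s::nat \<Rightarrow> int. lim_v av (\<lambda>n. of_int (s n)) x}"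

definition cont_Zp :: "('a::field_char_0 \<Rightarrow> real) \<Rightarrow> ('a \<Rightarrow> 'a) \<Rightarrow> bool" where
  "cont_Zp av \<phi> \<longleftrightarrow> (\<forall>x\<in>Zp av. \<forall>e>0. \<exists>d>0. \<forall>y\<in>Zp av.
       av (y - x) < d \<longrightarrow> av (\<phi> y - \<phi> x) < e)"

definition sums_v :: "('a::field_char_0 \<Rightarrow> real) \<Rightarrow> (nat \<Rightarrow> 'a) \<Rightarrow> 'a \<Rightarrow> bool" where
  "sums_v av f s \<longleftrightarrow> lim_v av (\<lambda>N. \<Sum>n<N. f n) s"

definition vsum :: "('a::field_char_0 \<Rightarrow> real) \<Rightarrow> (nat \<Rightarrow> 'a) \<Rightarrow> 'a" where
  "vsum av f = (THE s. sums_v av f s)"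

definition nabla :: "('a::field_char_0 \<Rightarrow> 'a) \<Rightarrow> 'a \<Rightarrow> 'a" where
  "nabla \<phi> = (\<lambda>x. \<phi> (x + 1) - \<phi> x)"

definition mahler :: "('a::field_char_0 \<Rightarrow> 'a) \<Rightarrow> nat \<Rightarrow> 'a" where
  "mahler \<phi> n = (nabla ^^ n) \<phi> 0"

definition conv :: "('a::field_char_0 \<Rightarrow> real) \<Rightarrow> ('a \<Rightarrow> 'a) \<Rightarrow> ('a \<Rightarrow> 'a) \<Rightarrow> 'a \<Rightarrow> 'a" where
  "conv av \<phi> \<psi> = (\<lambda>x. vsum av (\<lambda>n.
      (\<Sum>k\<le>n. of_nat (n choose k) * mahler \<phi> k * mahler \<psi> (n - k)) * (x gchoose n)))"

definition S_op :: "('a::field_char_0 \<Rightarrow> real) \<Rightarrow> 'a \<Rightarrow> ('a \<Rightarrow> 'a) \<Rightarrow> 'a \<Rightarrow> 'a" where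
  "S_op av y \<phi> = (\<lambda>x. vsum av (\<lambda>k.
      (-1) ^ k * fact k * (y gchoose k) * (x gchoose k) * \<phi> (x - of_nat k)))"

definition T_op :: "('a::field_char_0 \<Rightarrow> real) \<Rightarrow> 'a \<Rightarrow> ('a \<Rightarrow> 'a) \<Rightarrow> 'a \<Rightarrow> 'a" where
  "T_op av x \<phi> = (\<lambda>y. S_op av y \<phi> x)"

definition one_minus_x_pow :: "('a::field_char_0 \<Rightarrow> real) \<Rightarrow> 'a \<Rightarrow> 'a \<Rightarrow> 'a" where
  "one_minus_x_pow av y = S_op av y (\<lambda>_. 1)"

text \<open>The measure mu_{phi,x}, as the functional chi |-> integral of chi.\<close>
definition mu :: "('a::field_char_0 \<Rightarrow> real) \<Rightarrow> ('a \<Rightarrow> 'a) \<Rightarrow> 'a \<Rightarrow> ('a \<Rightarrow> 'a) \<Rightarrow> 'a" where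
  "mu av \<phi> x = (\<lambda>\<chi>. vsum av (\<lambda>n. mahler \<chi> n * (x gchoose n) * \<phi> (x - of_nat n)))"

end

(*
  At a natural number x = N every series involved is a finite sum.  Reading off the Mahler
  coefficients (-1)^n n! binom(y, n) of (1 - x)^(star y) = S^y(1) there gives the first equality
  for all x, and the second one at x = N is a binomial identity, obtained by expanding
  phi(N - n) in its Newton series.  Both sides of the second equality are continuous along
  naturals converging p-adically to x: every term is, and the series converge uniformly on Z_p
  because |n!| -> 0 and the Mahler coefficients of a continuous function tend to 0 (Mahler's
  theorem, which rests on p dividing binom(p^k, m) for 0 < m < p^k).  Density of the naturals
  in Z_p finishes the proof; the argument works for every psi with Mahler coefficients tending
  to 0 in place of (1 - x)^(star y).
*)
theory Submission
  imports Defs "HOL-Library.Diagonal_Subsequence"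
begin

section \<open>Newton series of sequences\<close>

definition fwd_diff :: "(nat \<Rightarrow> 'a::ab_group_add) \<Rightarrow> nat \<Rightarrow> 'a" where
  "fwd_diff u N = u (Suc N) - u N"

definition newton_sum :: "(nat \<Rightarrow> 'a::comm_ring_1) \<Rightarrow> nat \<Rightarrow> 'a" where
  "newton_sum a N = (\<Sum>m\<le>N. of_nat (N choose m) * a m)"

definition binomial_conv :: "(nat \<Rightarrow> 'a::comm_ring_1) \<Rightarrow> (nat \<Rightarrow> 'a) \<Rightarrow> nat \<Rightarrow> 'a" where
  "binomial_conv a b n = (\<Sum>k\<le>n. of_nat (n choose k) * a k * b (n - k))"

lemma newton_sum_atMost:
  "N \<le> K \<Longrightarrow> newton_sum a N = (\<Sum>m\<le>K. of_nat (N choose m) * a m)"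
  unfolding newton_sum_def
  by (intro sum.mono_neutral_left) (simp_all add: binomial_eq_0)

lemma fwd_diff_newton_sum: "fwd_diff (newton_sum a) = newton_sum (\<lambda>m. a (Suc m))"
proof
  fix N
  have "newton_sum a (Suc N) = a 0 + (\<Sum>m\<le>N. of_nat (Suc N choose Suc m) * a (Suc m))"
    unfolding newton_sum_def by (subst sum.atMost_Suc_shift) simp
  also have "\<dots> = a 0 + (\<Sum>m\<le>N. of_nat (N choose m) * a (Suc m))
      + (\<Sum>m\<le>N. of_nat (N choose Suc m) * a (Suc m))"
    by (simp add: sum.distrib distrib_right)
  moreover have "newton_sum a N = (\<Sum>m\<le>Suc N. of_nat (N choose m) * a m)"
    by (rule newton_sum_atMost) simp
  then have "newton_sum a N = a 0 + (\<Sum>m\<le>N. of_nat (N choose Suc m) * a (Suc m))"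
    by (subst (asm) sum.atMost_Suc_shift) simp
  ultimately show "fwd_diff (newton_sum a) N = newton_sum (\<lambda>m. a (Suc m)) N"
    by (simp add: fwd_diff_def newton_sum_def)
qed

lemma funpow_fwd_diff_newton_sum: "(fwd_diff ^^ j) (newton_sum a) = newton_sum (\<lambda>m. a (m + j))"
  by (induction j arbitrary: a) (simp_all add: funpow_Suc_right fwd_diff_newton_sum)

lemma funpow_fwd_diff_newton_sum_0: "(fwd_diff ^^ j) (newton_sum a) 0 = a j"
  by (simp add: funpow_fwd_diff_newton_sum newton_sum_def)

lemma newton_sum_funpow_fwd_diff: "newton_sum (\<lambda>m. (fwd_diff ^^ m) u 0) N = u N"
proof (induction N arbitrary: u)
  case 0
  show ?case by (simp add: newton_sum_def)
next
  case (Suc N)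
  define c where "c = (\<lambda>m. (fwd_diff ^^ m) u 0)"
  have c_Suc: "(\<lambda>m. c (Suc m)) = (\<lambda>m. (fwd_diff ^^ m) (fwd_diff u) 0)"
    by (simp only: c_def funpow_Suc_right o_apply)
  have "newton_sum c (Suc N) = newton_sum c N + fwd_diff (newton_sum c) N"
    by (simp add: fwd_diff_def)
  also have "\<dots> = newton_sum c N + newton_sum (\<lambda>m. (fwd_diff ^^ m) (fwd_diff u) 0) N"
    by (simp only: fwd_diff_newton_sum c_Suc)
  also have "\<dots> = u N + fwd_diff u N"
    unfolding c_def Suc.IH ..
  also have "\<dots> = u (Suc N)"
    by (simp add: fwd_diff_def)
  finally show ?case
    by (simp add: c_def)
qed

lemma funpow_fwd_diff_shift: "(fwd_diff ^^ m) (\<lambda>j. u (j + K)) j = (fwd_diff ^^ m) u (j + K)"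
  by (induction m arbitrary: j) (simp_all add: fwd_diff_def)

lemma funpow_fwd_diff_diff:
  "(fwd_diff ^^ m) (\<lambda>j. u j - v j) j = (fwd_diff ^^ m) u j - (fwd_diff ^^ m) v j"
  by (induction m arbitrary: j) (simp_all add: fwd_diff_def algebra_simps)

lemma newton_expansion_shift:
  fixes u :: "nat \<Rightarrow> 'a::comm_ring_1"
  shows "u (N + n) = (\<Sum>m\<le>n. of_nat (n choose m) * (fwd_diff ^^ m) u N)"
  using newton_sum_funpow_fwd_diff[of "\<lambda>j. u (j + N)" n]
  by (simp add: newton_sum_def funpow_fwd_diff_shift add.commute)

lemma newton_sum_binomial_conv:
  "newton_sum (binomial_conv a b) N = (\<Sum>k\<le>N. of_nat (N choose k) * a k * newton_sum b (N - k))"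
proof -
  define f where "f i j = of_nat (N choose i) * of_nat ((N - i) choose j) * a i * b j" for i j
  have "newton_sum (binomial_conv a b) N
      = (\<Sum>m\<le>N. \<Sum>k\<le>m. of_nat (N choose m) * (of_nat (m choose k) * a k * b (m - k)))"
    by (simp add: newton_sum_def binomial_conv_def sum_distrib_left)
  also have "\<dots> = (\<Sum>m\<le>N. \<Sum>k\<le>m. f k (m - k))"
  proof (intro sum.cong refl)
    fix m k assume "m \<in> {..N}" "k \<in> {..m}"
    then have "(N choose m) * (m choose k) = (N choose k) * ((N - k) choose (m - k))"
      by (intro choose_mult) auto
    then show "of_nat (N choose m) * (of_nat (m choose k) * a k * b (m - k)) = f k (m - k)"
      unfolding f_def by (metis (no_types, lifting) mult.assoc of_nat_mult)
  qed
  also have "\<dots> = (\<Sum>(i, j)\<in>{(i, j). i + j \<le> N}. f i j)"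
    by (rule sum.triangle_reindex_eq[symmetric])
  also have "{(i, j). i + j \<le> N} = (SIGMA i:{..N}. {..N - i})"
    by auto
  also have "(\<Sum>(i, j)\<in>(SIGMA i:{..N}. {..N - i}). f i j) = (\<Sum>i\<le>N. \<Sum>j\<le>N - i. f i j)"
    by (rule sum.Sigma[symmetric]) auto
  also have "\<dots> = (\<Sum>k\<le>N. of_nat (N choose k) * a k * newton_sum b (N - k))"
    by (simp add: newton_sum_def f_def sum_distrib_left mult_ac)
  finally show ?thesis .
qed

lemma mahler_eq_funpow_fwd_diff: "mahler f n = (fwd_diff ^^ n) (\<lambda>N. f (of_nat N)) 0"
proof -
  have "(nabla ^^ n) f (of_nat N) = (fwd_diff ^^ n) (\<lambda>N. f (of_nat N)) N" for N
  proof (induction n arbitrary: f N)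
    case (Suc n)
    have "(\<lambda>N. nabla f (of_nat N)) = fwd_diff (\<lambda>N. f (of_nat N))"
      by (auto simp: nabla_def fwd_diff_def add.commute)
    with Suc.IH[of "nabla f"] show ?case
      by (simp only: funpow_Suc_right o_apply)
  qed simp
  from this[of 0] show ?thesis
    by (simp add: mahler_def)
qed

lemma prime_dvd_choose_prime_power:
  assumes "prime p" "0 < m" "m < p ^ k"
  shows "p dvd (p ^ k choose m)"
proof (rule ccontr)
  assume "\<not> p dvd (p ^ k choose m)"
  then have "coprime (p ^ k) (p ^ k choose m)"
    using assms(1) by (simp add: prime_imp_coprime coprime_power_left_iff)
  moreover have "p ^ k dvd (p ^ k choose m) * m"
    using times_binomial_minus1_eq[OF assms(2), of "p ^ k"] by (metis dvd_triv_left mult.commute)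
  ultimately have "p ^ k dvd m"
    using coprime_dvd_mult_right_iff by blast
  with assms(2,3) show False
    by (simp add: nat_dvd_not_less)
qed


section \<open>Non-archimedean absolute values\<close>

definition naturals_near :: "('a::field_char_0 \<Rightarrow> real) \<Rightarrow> 'a \<Rightarrow> nat filter" where
  "naturals_near av x = (INF d\<in>{0<..}. principal {N. av (of_nat N - x) < d})"

definition cont_along_nat :: "('a::field_char_0 \<Rightarrow> real) \<Rightarrow> ('a \<Rightarrow> 'a) \<Rightarrow> 'a \<Rightarrow> bool" where
  "cont_along_nat av f x \<longleftrightarrow>
     (\<forall>e>0. eventually (\<lambda>N. av (f (of_nat N) - f x) < e) (naturals_near av x))"

lemma eventually_naturals_near:
  "eventually P (naturals_near av x) \<longleftrightarrow> (\<exists>d>0. \<forall>N. av (of_nat N - x) < d \<longrightarrow> P N)"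
  unfolding naturals_near_def
proof (subst eventually_INF_base)
  show "\<exists>c\<in>{0<..}. principal {N. av (of_nat N - x) < c}
      \<le> inf (principal {N. av (of_nat N - x) < a}) (principal {N. av (of_nat N - x) < b})"
    if "a \<in> {0<..}" "b \<in> {0<..}" for a b :: real
    using that by (intro bexI[of _ "min a b"]) auto
qed (auto simp: eventually_principal)

locale nonarch_field =
  fixes av :: "'a::field_char_0 \<Rightarrow> real"
  assumes abs_value_na: "abs_value_na av"
begin

lemma av_nonneg [simp]: "0 \<le> av x"
  and av_eq_0_iff [simp]: "av x = 0 \<longleftrightarrow> x = 0"
  and av_mult: "av (x * y) = av x * av y"
  and av_add_le: "av (x + y) \<le> max (av x) (av y)"
  using abs_value_na by (simp_all add: abs_value_na_def)

lemma av_0 [simp]: "av 0 = 0"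
  by simp

lemma av_pos_iff [simp]: "0 < av x \<longleftrightarrow> x \<noteq> 0"
  using av_nonneg[of x] av_eq_0_iff[of x] by linarith

lemma av_1 [simp]: "av 1 = 1"
  using av_mult[of 1 1] by simp

lemma av_minus [simp]: "av (- x) = av x"
proof -
  have "av (-1) ^ 2 = 1"
    using av_mult[of "-1" "-1"] by (simp add: power2_eq_square)
  then have "av (-1) = 1"
    using av_nonneg[of "-1"] by (simp add: power2_eq_1_iff)
  then show ?thesis
    using av_mult[of "-1" x] by simp
qed

lemma av_minus_commute: "av (x - y) = av (y - x)"
  by (metis av_minus minus_diff_eq)

lemma av_diff_le: "av (x - y) \<le> max (av x) (av y)"
  using av_add_le[of x "- y"] by simp

lemma av_triangle: "av (x - z) \<le> max (av (x - y)) (av (y - z))"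
  using av_add_le[of "x - y" "y - z"] by simp

lemma av_power: "av (x ^ n) = av x ^ n"
  by (induction n) (simp_all add: av_mult)

lemma av_of_nat_le_1: "av (of_nat n) \<le> 1"
proof (induction n)
  case (Suc n)
  then show ?case
    using av_add_le[of 1 "of_nat n"] by simp
qed simp

lemma av_of_int_le_1: "av (of_int m) \<le> 1"
  by (cases m rule: int_cases) (simp_all add: av_of_nat_le_1 del: of_nat_Suc)

lemma av_sum_le:
  assumes "\<And>i. i \<in> S \<Longrightarrow> av (f i) \<le> C" "0 \<le> C"
  shows "av (sum f S) \<le> C"
  using assms by (induction S rule: infinite_finite_induct) (auto intro: order.trans[OF av_add_le])

lemma lim_v_unique:
  assumes "lim_v av s l" "lim_v av s l'"
  shows "l = l'"
proof (rule ccontr)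
  assume "l \<noteq> l'"
  then have "av (l - l') > 0"
    by simp
  with assms obtain N N' where "\<forall>n\<ge>N. av (s n - l) < av (l - l')" "\<forall>n\<ge>N'. av (s n - l') < av (l - l')"
    unfolding lim_v_def by meson
  then have "av (l - s (max N N')) < av (l - l')" "av (s (max N N') - l') < av (l - l')"
    by (simp_all add: av_minus_commute)
  then show False
    using av_triangle[of l l' "s (max N N')"] by linarith
qed

lemma vsum_eqI: "sums_v av f s \<Longrightarrow> vsum av f = s"
  unfolding vsum_def sums_v_def using lim_v_unique by blast

lemma sums_v_finite:
  assumes "\<And>n. M \<le> n \<Longrightarrow> f n = 0"
  shows "sums_v av f (\<Sum>n<M. f n)"
proof -
  have "(\<Sum>n<N. f n) = (\<Sum>n<M. f n)" if "M \<le> N" for N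
    by (rule sum.mono_neutral_right) (use that assms in auto)
  then show ?thesis
    unfolding sums_v_def lim_v_def by (metis av_0 diff_self)
qed

lemma sums_v_dist_le:
  assumes "sums_v av f s" "sums_v av g t" "\<And>n. av (f n - g n) \<le> e"
  shows "av (s - t) \<le> e"
proof (rule ccontr)
  assume "\<not> av (s - t) \<le> e"
  moreover have "0 \<le> e"
    using av_nonneg[of "f 0 - g 0"] assms(3)[of 0] by linarith
  ultimately have e: "e < av (s - t)" "0 < av (s - t)"
    by linarith+
  obtain N N' where
    "\<forall>n\<ge>N. av ((\<Sum>k<n. f k) - s) < av (s - t)" "\<forall>n\<ge>N'. av ((\<Sum>k<n. g k) - t) < av (s - t)"
    using assms(1,2) e(2) unfolding sums_v_def lim_v_def by blast
  moreover define n where "n = max N N'"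
  ultimately have "av (s - (\<Sum>k<n. f k)) < av (s - t)" "av ((\<Sum>k<n. g k) - t) < av (s - t)"
    by (simp_all add: av_minus_commute)
  moreover have "av ((\<Sum>k<n. f k) - (\<Sum>k<n. g k)) \<le> e"
    unfolding sum_subtractf[symmetric] by (rule av_sum_le) (use assms(3) \<open>0 \<le> e\<close> in auto)
  ultimately show False
    using e av_triangle[of s t "\<Sum>k<n. f k"] av_triangle[of "\<Sum>k<n. f k" t "\<Sum>k<n. g k"] by linarith
qed

lemma funpow_fwd_diff_le:
  assumes "\<And>N. av (u N) \<le> C"
  shows "av ((fwd_diff ^^ m) u N) \<le> C"
proof (induction m arbitrary: N)
  case (Suc m)
  have "(fwd_diff ^^ Suc m) u N = (fwd_diff ^^ m) u (Suc N) - (fwd_diff ^^ m) u N"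
    by (simp only: funpow.simps(2) o_apply fwd_diff_def)
  also have "av \<dots> \<le> C"
    using av_diff_le Suc.IH[of N] Suc.IH[of "Suc N"] by (meson order.trans max.boundedI)
  finally show ?case .
qed (use assms in simp)

lemma av_prod: "av (prod f S) = (\<Prod>i\<in>S. av (f i))"
  by (induction S rule: infinite_finite_induct) (simp_all add: av_mult)

lemma av_prod_diff_le:
  assumes "\<And>i. i \<in> S \<Longrightarrow> av (f i) \<le> 1 \<and> av (g i) \<le> 1 \<and> av (f i - g i) \<le> c" "0 \<le> c"
  shows "av (prod f S - prod g S) \<le> c"
  using assms
proof (induction S rule: infinite_finite_induct)
  case (insert i S)
  have "f i * prod f S - g i * prod g S = f i * (prod f S - prod g S) + (f i - g i) * prod g S"
    by (simp add: algebra_simps)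
  moreover have "av (f i * (prod f S - prod g S)) \<le> 1 * c"
    unfolding av_mult using insert by (intro mult_mono) auto
  moreover have "av (prod g S) \<le> 1"
    using insert.prems by (simp add: av_prod prod_le_1)
  then have "av ((f i - g i) * prod g S) \<le> c * 1"
    unfolding av_mult using insert.prems by (intro mult_mono) auto
  ultimately show ?case
    using insert.hyps av_add_le[of "f i * (prod f S - prod g S)" "(f i - g i) * prod g S"] by simp
qed simp_all

lemma av_gchoose_diff_le:
  assumes "av u \<le> 1" "av v \<le> 1"
  shows "av (fact n) * av ((u gchoose n) - (v gchoose n)) \<le> av (u - v)"
proof -
  have "av (u - of_nat i) \<le> 1" "av (v - of_nat i) \<le> 1" for i
    using assms av_diff_le av_of_nat_le_1 by (meson max.boundedI order.trans)+
  then have "av ((\<Prod>i = 0..<n. u - of_nat i) - (\<Prod>i = 0..<n. v - of_nat i)) \<le> av (u - v)"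
    by (intro av_prod_diff_le) simp_all
  moreover have "fact n * ((u gchoose n) - (v gchoose n))
      = (\<Prod>i = 0..<n. u - of_nat i) - (\<Prod>i = 0..<n. v - of_nat i)"
    by (simp add: right_diff_distrib gbinomial_mult_fact)
  ultimately show ?thesis
    by (metis av_mult)
qed

lemma cont_along_nat_const: "cont_along_nat av (\<lambda>_. c) x"
  by (simp add: cont_along_nat_def)

lemma cont_along_nat_mult:
  assumes "cont_along_nat av f x" "cont_along_nat av g x"
  shows "cont_along_nat av (\<lambda>z. f z * g z) x"
  unfolding cont_along_nat_def
proof (intro allI impI)
  fix e :: real
  assume "0 < e"
  define K where "K = max 1 (max (av (f x)) (av (g x)))"
  define d where "d = min 1 (e / K)"
  have "1 \<le> K" "0 < d" "K * d \<le> e"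
    using \<open>0 < e\<close> by (auto simp: K_def d_def min_def field_simps)
  have close: "av (f (of_nat N) * g (of_nat N) - f x * g x) < e"
    if f: "av (f (of_nat N) - f x) < d" and g: "av (g (of_nat N) - g x) < d" for N
  proof -
    have "av (f (of_nat N)) \<le> max (av (f (of_nat N) - f x)) (av (f x))"
      using av_add_le[of "f (of_nat N) - f x" "f x"] by simp
    also have "\<dots> \<le> max 1 (av (f x))"
      using f by (intro max.mono) (simp_all add: d_def)
    also have "\<dots> \<le> K"
      unfolding K_def by (intro max.mono) simp_all
    finally have "av (f (of_nat N) * (g (of_nat N) - g x)) \<le> K * av (g (of_nat N) - g x)"
      unfolding av_mult by (rule mult_right_mono) simp
    also have "\<dots> < K * d"
      using g \<open>1 \<le> K\<close> by simp
    also have "\<dots> \<le> e"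
      by fact
    finally have fst: "av (f (of_nat N) * (g (of_nat N) - g x)) < e" .
    have "av ((f (of_nat N) - f x) * g x) \<le> av (f (of_nat N) - f x) * K"
      unfolding av_mult by (rule mult_left_mono) (simp_all add: K_def)
    also have "\<dots> < d * K"
      using f \<open>1 \<le> K\<close> by simp
    also have "\<dots> \<le> e"
      using \<open>K * d \<le> e\<close> by (simp add: mult.commute)
    finally show ?thesis
      using fst av_add_le[of "f (of_nat N) * (g (of_nat N) - g x)" "(f (of_nat N) - f x) * g x"]
      by (simp add: algebra_simps)
  qed
  have "eventually (\<lambda>N. av (f (of_nat N) - f x) < d) (naturals_near av x)"
    "eventually (\<lambda>N. av (g (of_nat N) - g x) < d) (naturals_near av x)"
    using assms \<open>0 < d\<close> unfolding cont_along_nat_def by blast+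
  then show "eventually (\<lambda>N. av (f (of_nat N) * g (of_nat N) - f x * g x) < e) (naturals_near av x)"
    by (rule eventually_elim2) (rule close)
qed

lemma binomial_conv_tendsto_zero:
  assumes a: "(\<lambda>n. av (a n)) \<longlonglongrightarrow> 0" and b: "(\<lambda>n. av (b n)) \<longlonglongrightarrow> 0"
  shows "(\<lambda>n. av (binomial_conv a b n)) \<longlonglongrightarrow> 0"
proof (rule LIMSEQ_I)
  fix r :: real
  assume "0 < r"
  obtain A where "0 < A" and A: "\<And>n. av (a n) \<le> A"
    using convergent_imp_Bseq[OF convergentI[OF a]] by (auto elim!: BseqE)
  obtain B where "0 < B" and B: "\<And>n. av (b n) \<le> B"
    using convergent_imp_Bseq[OF convergentI[OF b]] by (auto elim!: BseqE)
  obtain Ma where Ma: "\<And>k. Ma \<le> k \<Longrightarrow> av (a k) < r / (2 * B)"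
    using order_tendstoD(2)[OF a, of "r / (2 * B)"] \<open>0 < r\<close> \<open>0 < B\<close>
    by (auto simp: eventually_sequentially)
  obtain Mb where Mb: "\<And>k. Mb \<le> k \<Longrightarrow> av (b k) < r / (2 * A)"
    using order_tendstoD(2)[OF b, of "r / (2 * A)"] \<open>0 < r\<close> \<open>0 < A\<close>
    by (auto simp: eventually_sequentially)
  have "av (binomial_conv a b n) \<le> r / 2" if "Ma + Mb \<le> n" for n
    unfolding binomial_conv_def
  proof (rule av_sum_le)
    fix k
    have "av (of_nat (n choose k) * a k * b (n - k)) \<le> av (a k) * av (b (n - k))"
      unfolding av_mult mult.assoc
      using av_of_nat_le_1[of "n choose k"] by (intro mult_left_le_one_le) simp_all
    also have "\<dots> \<le> r / 2"
    proof (cases "Ma \<le> k")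
      case True
      then have "av (a k) * av (b (n - k)) \<le> r / (2 * B) * B"
        using Ma[of k] B[of "n - k"] \<open>0 < r\<close> \<open>0 < B\<close> by (intro mult_mono) simp_all
      then show ?thesis
        using \<open>0 < B\<close> by simp
    next
      case False
      then have "Mb \<le> n - k"
        using that by simp
      then have "av (a k) * av (b (n - k)) \<le> A * (r / (2 * A))"
        using Mb[of "n - k"] A[of k] \<open>0 < A\<close> by (intro mult_mono) simp_all
      then show ?thesis
        using \<open>0 < A\<close> by simp
    qed
    finally show "av (of_nat (n choose k) * a k * b (n - k)) \<le> r / 2" .
  qed (use \<open>0 < r\<close> in simp)
  then show "\<exists>M. \<forall>n\<ge>M. norm (av (binomial_conv a b n) - 0) < r"
    using \<open>0 < r\<close> by (intro exI[of _ "Ma + Mb"]) force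
qed

lemma mahler_one_minus_x_pow: "mahler (one_minus_x_pow av y) n = (-1) ^ n * fact n * (y gchoose n)"
proof -
  have "one_minus_x_pow av y (of_nat N) = newton_sum (\<lambda>n. (-1) ^ n * fact n * (y gchoose n)) N" for N
  proof -
    let ?t = "\<lambda>k. (-1) ^ k * fact k * (y gchoose k) * (of_nat N gchoose k) * (1::'a)"
    have "sums_v av ?t (\<Sum>k<Suc N. ?t k)"
      by (rule sums_v_finite) (simp add: binomial_gbinomial[symmetric])
    then have "one_minus_x_pow av y (of_nat N) = (\<Sum>k<Suc N. ?t k)"
      unfolding one_minus_x_pow_def S_op_def by (rule vsum_eqI)
    then show ?thesis
      by (simp add: newton_sum_def lessThan_Suc_atMost binomial_gbinomial mult_ac)
  qed
  then show ?thesis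
    by (simp add: mahler_eq_funpow_fwd_diff funpow_fwd_diff_newton_sum_0)
qed

lemma T_op_eq_mu: "T_op av x \<phi> y = mu av \<phi> x (one_minus_x_pow av y)"
  by (simp add: T_op_def S_op_def mu_def mahler_one_minus_x_pow)

lemma mu_eq_conv_of_nat: "mu av \<phi> (of_nat N) \<psi> = conv av \<psi> \<phi> (of_nat N)"
proof -
  define a where "a = mahler \<psi>"
  define b where "b = mahler \<phi>"
  have "mu av \<phi> (of_nat N) \<psi> = (\<Sum>n<Suc N. a n * (of_nat N gchoose n) * \<phi> (of_nat N - of_nat n))"
    unfolding mu_def a_def
    by (rule vsum_eqI, rule sums_v_finite) (simp add: binomial_gbinomial[symmetric])
  also have "\<dots> = (\<Sum>k\<le>N. of_nat (N choose k) * a k * newton_sum b (N - k))"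
    unfolding lessThan_Suc_atMost b_def mahler_eq_funpow_fwd_diff newton_sum_funpow_fwd_diff
    by (intro sum.cong) (simp_all add: binomial_gbinomial of_nat_diff mult_ac)
  also have "\<dots> = newton_sum (binomial_conv a b) N"
    by (rule newton_sum_binomial_conv[symmetric])
  also have "\<dots> = (\<Sum>n<Suc N. binomial_conv a b n * (of_nat N gchoose n))"
    by (simp add: newton_sum_def lessThan_Suc_atMost binomial_gbinomial mult_ac)
  also have "\<dots> = conv av \<psi> \<phi> (of_nat N)"
    unfolding conv_def a_def b_def binomial_conv_def[symmetric]
    by (rule vsum_eqI[symmetric], rule sums_v_finite) (simp add: binomial_gbinomial[symmetric])
  finally show ?thesis .
qed

end

section \<open>Complete \<open>p\<close>-adic fields\<close>

locale complete_padic_field = nonarch_field av for av :: "'a::field_char_0 \<Rightarrow> real" +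
  fixes p :: nat
  assumes prime_p: "prime p"
    and av_of_nat_p: "av (of_nat p) = 1 / real p"
    and complete: "cauchy_v av s \<Longrightarrow> \<exists>l. lim_v av s l"
begin

lemma p_gt_1: "1 < p"
  using prime_p prime_gt_1_nat by blast

lemma av_of_int_le_if_dvd:
  assumes "int p ^ k dvd m"
  shows "av (of_int m) \<le> (1 / real p) ^ k"
proof -
  obtain q where "m = int p ^ k * q"
    using assms by blast
  then have "av (of_int m) = (1 / real p) ^ k * av (of_int q)"
    by (simp add: av_mult av_power av_of_nat_p)
  also have "\<dots> \<le> (1 / real p) ^ k"
    using av_of_int_le_1[of q] by (simp add: mult_left_le)
  finally show ?thesis .
qed

lemma av_of_nat_le_if_dvd: "p ^ k dvd m \<Longrightarrow> av (of_nat m) \<le> (1 / real p) ^ k"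
  using av_of_int_le_if_dvd[of k "int m"] by (simp flip: of_nat_power)

lemma eventually_inverse_p_power_less: "0 < e \<Longrightarrow> \<exists>K. \<forall>k\<ge>K. (1 / real p) ^ k < e"
  using order_tendstoD(2)[OF LIMSEQ_power_zero[of "1 / real p"]] p_gt_1
  by (simp add: eventually_sequentially)

lemma av_fact_le: "av (fact n) \<le> (1 / real p) ^ (n div p)"
proof (induction n)
  case (Suc n)
  show ?case
  proof (cases "p dvd Suc n")
    case True
    then have "av (of_nat (Suc n)) * av (fact n) \<le> (1 / real p) * (1 / real p) ^ (n div p)"
      using av_of_nat_le_if_dvd[of 1 "Suc n"] Suc.IH by (intro mult_mono) (simp_all del: of_nat_Suc)
    then show ?thesis
      using True p_gt_1 by (simp add: av_mult div_Suc)
  next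
    case False
    then have "av (of_nat (Suc n)) * av (fact n) \<le> 1 * (1 / real p) ^ (n div p)"
      using av_of_nat_le_1[of "Suc n"] Suc.IH by (intro mult_mono) (simp_all del: of_nat_Suc)
    then show ?thesis
      using False p_gt_1 by (simp add: av_mult div_Suc dvd_eq_mod_eq_0)
  qed
qed simp

lemma av_fact_tendsto_zero: "(\<lambda>n. av (fact n)) \<longlonglongrightarrow> 0"
proof -
  have "(\<lambda>k. (1 / real p) ^ k) \<longlonglongrightarrow> 0"
    using p_gt_1 by (intro LIMSEQ_power_zero) simp_all
  moreover have "filterlim (\<lambda>n. n div p) at_top sequentially"
    using p_gt_1 by (intro filterlim_at_top_div_const_nat) simp
  ultimately have "(\<lambda>n. (1 / real p) ^ (n div p)) \<longlonglongrightarrow> 0"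
    by (rule filterlim_compose)
  with tendsto_const show ?thesis
    by (rule real_tendsto_sandwich[rotated 2]) (simp_all add: av_fact_le)
qed

lemma sums_v_vsum:
  assumes "(\<lambda>n. av (f n)) \<longlonglongrightarrow> 0"
  shows "sums_v av f (vsum av f)"
proof -
  have "cauchy_v av (\<lambda>N. \<Sum>n<N. f n)"
    unfolding cauchy_v_def
  proof (intro allI impI)
    fix e :: real
    assume "0 < e"
    then obtain M where M: "\<And>n. M \<le> n \<Longrightarrow> av (f n) < e / 2"
      using order_tendstoD(2)[OF assms, of "e / 2"] by (auto simp: eventually_sequentially)
    have close: "av ((\<Sum>n<a. f n) - (\<Sum>n<b. f n)) < e" if "M \<le> b" "b \<le> a" for a b
    proof -
      have "(\<Sum>n<a. f n) - (\<Sum>n<b. f n) = (\<Sum>n\<in>{b..<a}. f n)"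
        using sum_diff_nat_ivl[of 0 b a f] that by (simp add: lessThan_atLeast0)
      also have "av \<dots> \<le> e / 2"
        using M that \<open>0 < e\<close> by (intro av_sum_le) (auto intro: less_imp_le)
      finally show ?thesis
        using \<open>0 < e\<close> by linarith
    qed
    show "\<exists>N. \<forall>m\<ge>N. \<forall>n\<ge>N. av ((\<Sum>n<m. f n) - (\<Sum>n<n. f n)) < e"
    proof (intro exI[of _ M] allI impI)
      fix m n
      assume "M \<le> m" "M \<le> n"
      then show "av ((\<Sum>n<m. f n) - (\<Sum>n<n. f n)) < e"
        using close[of n m] close[of m n] by (cases "n \<le> m") (simp_all add: av_minus_commute)
    qed
  qed
  then obtain s where "sums_v av f s"
    using complete unfolding sums_v_def by blast
  then show ?thesis
    using vsum_eqI by simp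
qed

lemma of_nat_in_Zp: "of_nat n \<in> Zp av"
  unfolding Zp_def lim_v_def by (auto intro!: exI[of _ "\<lambda>_. int n"])

lemma diff_of_nat_in_Zp:
  assumes "x \<in> Zp av"
  shows "x - of_nat n \<in> Zp av"
proof -
  obtain s where "lim_v av (\<lambda>j. of_int (s j)) x"
    using assms unfolding Zp_def by blast
  then have "lim_v av (\<lambda>j. of_int (s j - int n)) (x - of_nat n)"
    unfolding lim_v_def by (simp add: algebra_simps)
  then show ?thesis
    unfolding Zp_def by (intro CollectI exI[of _ "\<lambda>j. s j - int n"])
qed

text \<open>An integer \<open>t\<close> is \<open>p\<close>-adically close to the natural number \<open>t + p\<^sup>k \<bar>t\<bar>\<close>.\<close>
lemma Zp_approx_of_nat:
  assumes "x \<in> Zp av" "0 < d"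
  shows "\<exists>N. av (of_nat N - x) < d"
proof -
  obtain s where "lim_v av (\<lambda>j. of_int (s j)) x"
    using assms(1) unfolding Zp_def by blast
  then obtain t where t: "av (of_int t - x) < d"
    using assms(2) unfolding lim_v_def by blast
  obtain k where k: "(1 / real p) ^ k < d"
    using eventually_inverse_p_power_less[OF assms(2)] by blast
  have "1 \<le> int p ^ k"
    using p_gt_1 by simp
  then have "\<bar>t\<bar> \<le> int p ^ k * \<bar>t\<bar>"
    using mult_right_mono[of 1 "int p ^ k" "\<bar>t\<bar>"] by simp
  then have "0 \<le> t + int p ^ k * \<bar>t\<bar>"
    by linarith
  then have "of_nat (nat (t + int p ^ k * \<bar>t\<bar>)) - x = (of_int t - x) + of_int (int p ^ k * \<bar>t\<bar>)"
    by simp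
  then have "av (of_nat (nat (t + int p ^ k * \<bar>t\<bar>)) - x)
      \<le> max (av (of_int t - x)) (av (of_int (int p ^ k * \<bar>t\<bar>)))"
    by (simp only: av_add_le)
  also have "\<dots> < d"
    using t k av_of_int_le_if_dvd[of k "int p ^ k * \<bar>t\<bar>"] by simp
  finally show ?thesis ..
qed

lemma av_le_1_if_in_Zp:
  assumes "x \<in> Zp av"
  shows "av x \<le> 1"
proof -
  obtain N where "av (of_nat N - x) < 1"
    using Zp_approx_of_nat[OF assms, of 1] by auto
  then show ?thesis
    using av_diff_le[of "of_nat N" "of_nat N - x"] av_of_nat_le_1[of N] by simp
qed

lemma av_gchoose_le_1_if_in_Zp:
  assumes "x \<in> Zp av"
  shows "av (x gchoose n) \<le> 1"
proof -
  obtain N where N: "av (of_nat N - x) < av (fact n)"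
    using Zp_approx_of_nat[OF assms, of "av (fact n)"] by auto
  have "av (fact n) * av ((of_nat N gchoose n) - (x gchoose n)) < av (fact n)"
    using av_gchoose_diff_le[OF av_of_nat_le_1[of N] av_le_1_if_in_Zp[OF assms], of n] N by linarith
  then have "av ((of_nat N gchoose n) - (x gchoose n)) < 1"
    by (simp add: mult_less_cancel_left1)
  moreover have "av (of_nat N gchoose n) \<le> 1"
    by (metis binomial_gbinomial av_of_nat_le_1)
  ultimately show ?thesis
    using av_diff_le[of "of_nat N gchoose n" "(of_nat N gchoose n) - (x gchoose n)"] by simp
qed

lemma naturals_near_neq_bot: "x \<in> Zp av \<Longrightarrow> naturals_near av x \<noteq> bot"
  unfolding trivial_limit_def eventually_naturals_near using Zp_approx_of_nat by blast

lemma cont_along_nat_eq: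
  assumes "x \<in> Zp av" "cont_along_nat av f x" "cont_along_nat av g x"
    and "\<And>N. f (of_nat N) = g (of_nat N)"
  shows "f x = g x"
proof (rule ccontr)
  assume "f x \<noteq> g x"
  then have "0 < av (f x - g x)"
    by simp
  with assms(2,3) have "eventually (\<lambda>N. av (f (of_nat N) - f x) < av (f x - g x)
      \<and> av (g (of_nat N) - g x) < av (f x - g x)) (naturals_near av x)"
    unfolding cont_along_nat_def by (intro eventually_conj) simp_all
  then obtain N where "av (f x - f (of_nat N)) < av (f x - g x)" "av (g (of_nat N) - g x) < av (f x - g x)"
    using eventually_happens'[OF naturals_near_neq_bot[OF assms(1)]] by (auto simp: av_minus_commute)
  with assms(4)[of N] show False
    using av_triangle[of "f x" "g x" "f (of_nat N)"] by simp
qed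

lemma cont_along_nat_gchoose:
  assumes "x \<in> Zp av"
  shows "cont_along_nat av (\<lambda>z. z gchoose n) x"
  unfolding cont_along_nat_def eventually_naturals_near
proof (intro allI impI exI[of _ "av (fact n) * e" for e] conjI)
  fix e :: real and N
  assume "0 < e" "av (of_nat N - x) < av (fact n) * e"
  then have "av (fact n) * av ((of_nat N gchoose n) - (x gchoose n)) < av (fact n) * e"
    using av_gchoose_diff_le[OF av_of_nat_le_1[of N] av_le_1_if_in_Zp[OF assms], of n] by linarith
  then show "av ((of_nat N gchoose n) - (x gchoose n)) < e"
    by simp
qed simp

lemma cont_along_nat_comp_diff:
  assumes "cont_Zp av \<phi>" "x \<in> Zp av"
  shows "cont_along_nat av (\<lambda>z. \<phi> (z - of_nat n)) x"
  unfolding cont_along_nat_def eventually_naturals_near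
proof (intro allI impI)
  fix e :: real
  assume "0 < e"
  moreover have "x - of_nat n \<in> Zp av"
    by (rule diff_of_nat_in_Zp[OF assms(2)])
  ultimately obtain d where "0 < d"
    and d: "\<forall>w\<in>Zp av. av (w - (x - of_nat n)) < d \<longrightarrow> av (\<phi> w - \<phi> (x - of_nat n)) < e"
    using assms(1) unfolding cont_Zp_def by blast
  have "av (\<phi> (of_nat N - of_nat n) - \<phi> (x - of_nat n)) < e" if "av (of_nat N - x) < d" for N
    using d diff_of_nat_in_Zp[OF of_nat_in_Zp] that by simp
  with \<open>0 < d\<close> show "\<exists>d>0. \<forall>N. av (of_nat N - x) < d \<longrightarrow>
      av (\<phi> (of_nat N - of_nat n) - \<phi> (x - of_nat n)) < e"
    by blast
qed

lemma cont_along_nat_vsum: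
  assumes "x \<in> Zp av" "\<beta> \<longlonglongrightarrow> 0" "\<And>z n. z \<in> Zp av \<Longrightarrow> av (t z n) \<le> \<beta> n"
    and "\<And>n. cont_along_nat av (\<lambda>z. t z n) x"
  shows "cont_along_nat av (\<lambda>z. vsum av (t z)) x"
  unfolding cont_along_nat_def
proof (intro allI impI)
  fix e :: real
  assume "0 < e"
  have sums: "sums_v av (t z) (vsum av (t z))" if "z \<in> Zp av" for z
  proof (rule sums_v_vsum)
    show "(\<lambda>n. av (t z n)) \<longlonglongrightarrow> 0"
      using tendsto_const assms(2) by (rule real_tendsto_sandwich[rotated 2]) (simp_all add: assms(3)[OF that])
  qed
  obtain M where M: "\<And>n. M \<le> n \<Longrightarrow> \<beta> n < e / 2"
    using order_tendstoD(2)[OF assms(2), of "e / 2"] \<open>0 < e\<close> by (auto simp: eventually_sequentially)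
  have "\<forall>n\<in>{..<M}. eventually (\<lambda>N. av (t (of_nat N) n - t x n) < e / 2) (naturals_near av x)"
    using assms(4) \<open>0 < e\<close> unfolding cont_along_nat_def by (meson half_gt_zero)
  then have "eventually (\<lambda>N. \<forall>n\<in>{..<M}. av (t (of_nat N) n - t x n) < e / 2) (naturals_near av x)"
    by (rule eventually_ball_finite[rotated]) simp
  then show "eventually (\<lambda>N. av (vsum av (t (of_nat N)) - vsum av (t x)) < e) (naturals_near av x)"
  proof (rule eventually_mono)
    fix N
    assume head: "\<forall>n\<in>{..<M}. av (t (of_nat N) n - t x n) < e / 2"
    have "av (t (of_nat N) n - t x n) \<le> e / 2" for n
    proof (cases "n < M")
      case False
      then have "max (av (t (of_nat N) n)) (av (t x n)) \<le> e / 2"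
        using M[of n] assms(3)[OF of_nat_in_Zp, of N n] assms(3)[OF assms(1), of n] by simp
      with av_diff_le show ?thesis
        by (rule order.trans)
    qed (use head in \<open>auto intro: less_imp_le\<close>)
    with sums[OF of_nat_in_Zp] sums[OF assms(1)] have "av (vsum av (t (of_nat N)) - vsum av (t x)) \<le> e / 2"
      by (rule sums_v_dist_le)
    then show "av (vsum av (t (of_nat N)) - vsum av (t x)) < e"
      using \<open>0 < e\<close> by linarith
  qed
qed

subsection \<open>Mahler's theorem\<close>

lemma av_choose_prime_power_le:
  assumes "0 < m" "m < p ^ k"
  shows "av (of_nat (p ^ k choose m)) \<le> 1 / real p"
  using av_of_nat_le_if_dvd[of 1] prime_dvd_choose_prime_power[OF prime_p assms] by simp

text \<open>The key estimate behind Mahler's theorem: since \<open>p\<close> divides \<open>p\<^sup>k choose m\<close> for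
  \<open>0 < m < p\<^sup>k\<close>, the Newton expansion of \<open>u (N + p\<^sup>k)\<close> determines the \<open>p\<^sup>k\<close>-th difference
  from the increment \<open>u (N + p\<^sup>k) - u N\<close> up to an error of size \<open>C / p\<close>.\<close>
lemma av_funpow_fwd_diff_prime_power_le:
  assumes C: "\<And>N. av (u N) \<le> C" and e: "\<And>N. av (u (N + p ^ k) - u N) \<le> e"
  shows "av ((fwd_diff ^^ p ^ k) u N) \<le> max e (C / real p)"
proof -
  define n where "n = p ^ k"
  have "1 \<le> n"
    using p_gt_1 by (simp add: n_def)
  then have "{..n} = insert 0 (insert n {1..<n})"
    by auto
  then have "u (N + n) = u N + (fwd_diff ^^ n) u N + (\<Sum>m\<in>{1..<n}. of_nat (n choose m) * (fwd_diff ^^ m) u N)"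
    using \<open>1 \<le> n\<close> by (simp add: newton_expansion_shift[of u N n])
  then have eq: "(fwd_diff ^^ n) u N
      = (u (N + n) - u N) - (\<Sum>m\<in>{1..<n}. of_nat (n choose m) * (fwd_diff ^^ m) u N)"
    by (simp add: algebra_simps)
  have "0 \<le> C"
    using C[of 0] by (rule order.trans[OF av_nonneg])
  have "av (\<Sum>m\<in>{1..<n}. of_nat (n choose m) * (fwd_diff ^^ m) u N) \<le> C / real p"
  proof (rule av_sum_le)
    fix m
    assume "m \<in> {1..<n}"
    then have "av (of_nat (n choose m)) * av ((fwd_diff ^^ m) u N) \<le> 1 / real p * C"
      using av_choose_prime_power_le funpow_fwd_diff_le[OF C] by (intro mult_mono) (auto simp: n_def)
    then show "av (of_nat (n choose m) * (fwd_diff ^^ m) u N) \<le> C / real p"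
      by (simp add: av_mult)
  qed (use \<open>0 \<le> C\<close> in simp)
  moreover have "av ((fwd_diff ^^ n) u N)
      \<le> max (av (u (N + n) - u N)) (av (\<Sum>m\<in>{1..<n}. of_nat (n choose m) * (fwd_diff ^^ m) u N))"
    unfolding eq by (rule av_diff_le)
  ultimately show ?thesis
    using e[of N] unfolding n_def by (meson max.mono order.trans)
qed

lemma funpow_fwd_diff_tendsto_zero:
  assumes B: "\<And>N. av (u N) \<le> B"
    and uniform: "\<And>e. 0 < e \<Longrightarrow> \<exists>k. \<forall>N. av (u (N + p ^ k) - u N) \<le> e"
  shows "(\<lambda>j. av ((fwd_diff ^^ j) u 0)) \<longlonglongrightarrow> 0"
proof (rule LIMSEQ_I)
  fix r :: real
  assume "0 < r"
  define e where "e = r / 2"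
  have "0 < e"
    using \<open>0 < r\<close> by (simp add: e_def)
  have "0 \<le> B"
    using B[of 0] by (rule order.trans[OF av_nonneg])
  obtain k where k: "\<And>N. av (u (N + p ^ k) - u N) \<le> e"
    using uniform[OF \<open>0 < e\<close>] by blast
  have contract: "max e Y / real p \<le> max e (Y / real p)" for Y
  proof (cases "e \<le> Y")
    case False
    have "e / real p \<le> e"
      using p_gt_1 \<open>0 < e\<close> by (simp add: divide_le_eq)
    with False show ?thesis
      by (simp add: max_def)
  qed (simp add: max_def)
  have iterate: "av ((fwd_diff ^^ (t * p ^ k)) u N) \<le> max e (B * (1 / real p) ^ t)" for t N
  proof (induction t arbitrary: N)
    case 0
    show ?case
      using B[of N] by (simp add: le_max_iff_disj)
  next
    case (Suc t)
    define g where "g = (fwd_diff ^^ (t * p ^ k)) u"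
    have "g (N + p ^ k) - g N = (fwd_diff ^^ (t * p ^ k)) (\<lambda>j. u (j + p ^ k) - u j) N" for N
      by (simp add: g_def funpow_fwd_diff_diff funpow_fwd_diff_shift)
    moreover have "av ((fwd_diff ^^ (t * p ^ k)) (\<lambda>j. u (j + p ^ k) - u j) N) \<le> e" for N
      by (rule funpow_fwd_diff_le) (rule k)
    ultimately have "av (g (N + p ^ k) - g N) \<le> e" for N
      by simp
    then have "av ((fwd_diff ^^ p ^ k) g N) \<le> max e (max e (B * (1 / real p) ^ t) / real p)"
      using Suc.IH by (intro av_funpow_fwd_diff_prime_power_le) (simp_all add: g_def)
    also have "\<dots> \<le> max e (B * (1 / real p) ^ Suc t)"
      using contract[of "B * (1 / real p) ^ t"] by simp
    also have "(fwd_diff ^^ p ^ k) g = (fwd_diff ^^ (Suc t * p ^ k)) u"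
      by (simp add: g_def funpow_add)
    finally show ?case .
  qed
  obtain t where t: "(1 / real p) ^ t < e / (B + 1)"
    using eventually_inverse_p_power_less[of "e / (B + 1)"] \<open>0 < e\<close> \<open>0 \<le> B\<close> by auto
  have "B * (1 / real p) ^ t \<le> (B + 1) * (e / (B + 1))"
    using t \<open>0 \<le> B\<close> by (intro mult_mono) simp_all
  then have small: "av ((fwd_diff ^^ (t * p ^ k)) u N) \<le> e" for N
    using iterate[of t N] \<open>0 \<le> B\<close> by simp
  have bound: "av ((fwd_diff ^^ j) u 0) \<le> e" if "t * p ^ k \<le> j" for j
  proof -
    have "(fwd_diff ^^ j) u = (fwd_diff ^^ ((j - t * p ^ k) + t * p ^ k)) u"
      using that by simp
    also have "\<dots> = (fwd_diff ^^ (j - t * p ^ k)) ((fwd_diff ^^ (t * p ^ k)) u)"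
      by (simp only: funpow_add o_apply)
    finally show ?thesis
      using funpow_fwd_diff_le[OF small] by simp
  qed
  show "\<exists>J. \<forall>j\<ge>J. norm (av ((fwd_diff ^^ j) u 0) - 0) < r"
  proof (intro exI allI impI)
    fix j
    assume "t * p ^ k \<le> j"
    then show "norm (av ((fwd_diff ^^ j) u 0) - 0) < r"
      using bound[of j] \<open>0 < r\<close> by (simp add: e_def)
  qed
qed

lemma av_of_nat_diff_le_if_mod_eq:
  assumes "a mod p ^ k = b mod p ^ k"
  shows "av (of_nat a - of_nat b) \<le> (1 / real p) ^ k"
proof -
  have "int a mod int p ^ k = int b mod int p ^ k"
    using arg_cong[OF assms, of int] by (simp add: zmod_int)
  then have "int p ^ k dvd int a - int b"
    by (simp add: mod_eq_dvd_iff)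
  then show ?thesis
    using av_of_int_le_if_dvd by fastforce
qed

lemma of_nat_subseq_lim_v:
  fixes n :: "nat \<Rightarrow> nat"
  obtains r x where "strict_mono r" "x \<in> Zp av" "lim_v av (\<lambda>i. of_nat (n (r i))) x"
proof -
  define P where "P j s \<longleftrightarrow> (\<forall>i i'. n (s i) mod p ^ j = n (s i') mod p ^ j)" for j and s :: "nat \<Rightarrow> nat"
  interpret subseqs P
  proof
    fix j and s :: "nat \<Rightarrow> nat"
    have "0 < p ^ j"
      using p_gt_1 by simp
    then have "range (\<lambda>i. n (s i) mod p ^ j) \<subseteq> {..<p ^ j}"
      by auto
    then have "finite (range (\<lambda>i. n (s i) mod p ^ j))"
      by (rule finite_subset) simp
    then obtain i0 where "infinite {i. n (s i) mod p ^ j = n (s i0) mod p ^ j}"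
      using pigeonhole_infinite[of UNIV "\<lambda>i. n (s i) mod p ^ j"] by auto
    moreover define S where "S = {i. n (s i) mod p ^ j = n (s i0) mod p ^ j}"
    ultimately have "infinite S"
      by simp
    show "\<exists>r'. strict_mono r' \<and> P j (s \<circ> r')"
    proof (intro exI conjI)
      show "strict_mono (enumerate S)"
        using \<open>infinite S\<close> by (simp add: strict_mono_def)
      show "P j (s \<circ> enumerate S)"
        using enumerate_in_set[OF \<open>infinite S\<close>] unfolding P_def S_def by simp
    qed
  qed
  have congruent: "n (diagseq a) mod p ^ k = n (diagseq b) mod p ^ k" if "Suc k \<le> a" "Suc k \<le> b" for a b k
  proof -
    have "P k (diagseq \<circ> (+) (Suc k))"
      by (rule diagseq_holds) (unfold P_def comp_def, blast)
    then have "n (diagseq (Suc k + (a - Suc k))) mod p ^ k = n (diagseq (Suc k + (b - Suc k))) mod p ^ k"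
      unfolding P_def comp_def by blast
    with that show ?thesis
      by simp
  qed
  have "cauchy_v av (\<lambda>i. of_nat (n (diagseq i)))"
    unfolding cauchy_v_def
  proof (intro allI impI)
    fix e :: real
    assume "0 < e"
    then obtain K where "(1 / real p) ^ K < e"
      using eventually_inverse_p_power_less by blast
    show "\<exists>N. \<forall>a\<ge>N. \<forall>b\<ge>N. av (of_nat (n (diagseq a)) - of_nat (n (diagseq b))) < e"
    proof (intro exI[of _ "Suc K"] allI impI)
      fix a b
      assume "Suc K \<le> a" "Suc K \<le> b"
      then have "av (of_nat (n (diagseq a)) - of_nat (n (diagseq b))) \<le> (1 / real p) ^ K"
        by (intro av_of_nat_diff_le_if_mod_eq congruent)
      with \<open>(1 / real p) ^ K < e\<close> show "av (of_nat (n (diagseq a)) - of_nat (n (diagseq b))) < e"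
        by linarith
    qed
  qed
  then obtain x where x: "lim_v av (\<lambda>i. of_nat (n (diagseq i))) x"
    using complete by blast
  moreover have "x \<in> Zp av"
    using x unfolding Zp_def by (intro CollectI exI[of _ "\<lambda>i. int (n (diagseq i))"]) simp
  ultimately show thesis
    using subseq_diagseq by (intro that)
qed

lemma cont_Zp_uniform:
  assumes "cont_Zp av \<phi>" "0 < e"
  shows "\<exists>k. \<forall>N. av (\<phi> (of_nat (N + p ^ k)) - \<phi> (of_nat N)) < e"
proof (rule ccontr)
  assume "\<not> ?thesis"
  then have "\<forall>k. \<exists>N. e \<le> av (\<phi> (of_nat (N + p ^ k)) - \<phi> (of_nat N))"
    by (simp add: not_less)
  then obtain n where n: "\<And>k. e \<le> av (\<phi> (of_nat (n k + p ^ k)) - \<phi> (of_nat (n k)))"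
    by metis
  obtain r x where "strict_mono r" "x \<in> Zp av" and x: "lim_v av (\<lambda>i. of_nat (n (r i))) x"
    using of_nat_subseq_lim_v[of n] by blast
  then obtain d where "0 < d"
    and d: "\<forall>y\<in>Zp av. av (y - x) < d \<longrightarrow> av (\<phi> y - \<phi> x) < e"
    using assms unfolding cont_Zp_def by blast
  obtain i0 where i0: "\<forall>i\<ge>i0. av (of_nat (n (r i)) - x) < d"
    using x \<open>0 < d\<close> unfolding lim_v_def by blast
  obtain K where K: "\<forall>k\<ge>K. (1 / real p) ^ k < d"
    using eventually_inverse_p_power_less[OF \<open>0 < d\<close>] by blast
  define i where "i = max i0 K"
  define y\<^sub>1 :: 'a where "y\<^sub>1 = of_nat (n (r i))"
  define y\<^sub>2 :: 'a where "y\<^sub>2 = of_nat (n (r i) + p ^ r i)"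
  have "K \<le> r i"
    using seq_suble[OF \<open>strict_mono r\<close>, of i] by (simp add: i_def)
  have y\<^sub>1: "av (y\<^sub>1 - x) < d"
    using i0 by (simp add: i_def y\<^sub>1_def)
  have "av (of_nat (p ^ r i)) \<le> (1 / real p) ^ r i"
    by (rule av_of_nat_le_if_dvd) simp
  also have "\<dots> < d"
    using K \<open>K \<le> r i\<close> by blast
  finally have "av (of_nat (p ^ r i)) < d" .
  have "av (y\<^sub>2 - x) \<le> max (av (y\<^sub>1 - x)) (av (of_nat (p ^ r i)))"
    using av_add_le[of "y\<^sub>1 - x" "of_nat (p ^ r i)"] by (simp add: y\<^sub>1_def y\<^sub>2_def algebra_simps)
  also have "\<dots> < d"
    using y\<^sub>1 \<open>av (of_nat (p ^ r i)) < d\<close> by simp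
  finally have "av (\<phi> y\<^sub>2 - \<phi> x) < e" "av (\<phi> y\<^sub>1 - \<phi> x) < e"
    using d y\<^sub>1 of_nat_in_Zp unfolding y\<^sub>1_def y\<^sub>2_def by blast+
  then have "av (\<phi> y\<^sub>2 - \<phi> y\<^sub>1) < e"
    using av_triangle[of "\<phi> y\<^sub>2" "\<phi> y\<^sub>1" "\<phi> x"] by (simp add: av_minus_commute[of "\<phi> x"])
  with n[of "r i"] show False
    by (simp add: y\<^sub>1_def y\<^sub>2_def)
qed

lemma cont_Zp_bounded:
  assumes "cont_Zp av \<phi>"
  obtains B where "\<And>z. z \<in> Zp av \<Longrightarrow> av (\<phi> z) \<le> B"
proof -
  obtain k where k: "\<And>N. av (\<phi> (of_nat (N + p ^ k)) - \<phi> (of_nat N)) < 1"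
    using cont_Zp_uniform[OF assms, of 1] by auto
  define B where "B = max 1 (MAX M\<in>{..<p ^ k}. av (\<phi> (of_nat M)))"
  have nat_bound: "av (\<phi> (of_nat N)) \<le> B" for N
  proof (induction N rule: less_induct)
    case (less N)
    show ?case
    proof (cases "N < p ^ k")
      case True
      have "av (\<phi> (of_nat N)) \<le> (MAX M\<in>{..<p ^ k}. av (\<phi> (of_nat M)))"
        by (rule Max_ge) (use True in simp_all)
      then show ?thesis
        unfolding B_def by (rule max.coboundedI2)
    next
      case False
      moreover have "0 < p ^ k"
        using p_gt_1 by simp
      ultimately have "N = (N - p ^ k) + p ^ k" and "N - p ^ k < N"
        by linarith+
      then have "av (\<phi> (of_nat N))
          \<le> max (av (\<phi> (of_nat (N - p ^ k + p ^ k)) - \<phi> (of_nat (N - p ^ k)))) (av (\<phi> (of_nat (N - p ^ k))))"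
        using av_add_le by (metis diff_add_cancel)
      also have "\<dots> \<le> B"
        using k[of "N - p ^ k"] less.IH[OF \<open>N - p ^ k < N\<close>] by (simp add: B_def)
      finally show ?thesis .
    qed
  qed
  have "av (\<phi> z) \<le> B" if "z \<in> Zp av" for z
  proof -
    obtain d where "0 < d" and d: "\<forall>y\<in>Zp av. av (y - z) < d \<longrightarrow> av (\<phi> y - \<phi> z) < 1"
      using assms \<open>z \<in> Zp av\<close> unfolding cont_Zp_def by (meson zero_less_one)
    obtain N where "av (of_nat N - z) < d"
      using Zp_approx_of_nat[OF \<open>z \<in> Zp av\<close> \<open>0 < d\<close>] by blast
    then have "av (\<phi> z - \<phi> (of_nat N)) < 1"
      using d of_nat_in_Zp by (simp add: av_minus_commute[of "\<phi> z"])
    then have "av (\<phi> z) \<le> max 1 (av (\<phi> (of_nat N)))"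
      using av_add_le[of "\<phi> z - \<phi> (of_nat N)" "\<phi> (of_nat N)"] by simp
    also have "\<dots> \<le> B"
      using nat_bound[of N] by (simp add: B_def)
    finally show ?thesis .
  qed
  then show thesis
    by (rule that)
qed

theorem mahler_tendsto_zero:
  assumes "cont_Zp av \<phi>"
  shows "(\<lambda>n. av (mahler \<phi> n)) \<longlonglongrightarrow> 0"
proof -
  obtain B where "\<And>z. z \<in> Zp av \<Longrightarrow> av (\<phi> z) \<le> B"
    using cont_Zp_bounded[OF assms] by blast
  then have "\<And>N. av (\<phi> (of_nat N)) \<le> B"
    using of_nat_in_Zp by blast
  moreover have "\<exists>k. \<forall>N. av (\<phi> (of_nat (N + p ^ k)) - \<phi> (of_nat N)) \<le> e" if "0 < e" for e
    using cont_Zp_uniform[OF assms that] by (meson less_imp_le)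
  ultimately show ?thesis
    unfolding mahler_eq_funpow_fwd_diff by (rule funpow_fwd_diff_tendsto_zero)
qed

subsection \<open>The measures \<open>mu av \<phi> x\<close>\<close>

lemma mahler_one_minus_x_pow_tendsto_zero:
  assumes "y \<in> Zp av"
  shows "(\<lambda>n. av (mahler (one_minus_x_pow av y) n)) \<longlonglongrightarrow> 0"
proof -
  have bound: "av (mahler (one_minus_x_pow av y) n) \<le> av (fact n)" for n
    using av_gchoose_le_1_if_in_Zp[OF assms, of n]
    by (simp add: mahler_one_minus_x_pow av_mult av_power mult_left_le)
  show ?thesis
    using tendsto_const av_fact_tendsto_zero by (rule real_tendsto_sandwich[rotated 2]) (simp_all add: bound)
qed

lemma cont_along_nat_mu:
  assumes "cont_Zp av \<phi>" "x \<in> Zp av" and \<psi>: "(\<lambda>n. av (mahler \<psi> n)) \<longlonglongrightarrow> 0"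
  shows "cont_along_nat av (\<lambda>z. mu av \<phi> z \<psi>) x"
proof -
  obtain B where B: "\<And>z. z \<in> Zp av \<Longrightarrow> av (\<phi> z) \<le> B"
    using cont_Zp_bounded[OF assms(1)] by blast
  have "av (mahler \<psi> n * (z gchoose n) * \<phi> (z - of_nat n)) \<le> av (mahler \<psi> n) * B"
    if "z \<in> Zp av" for z n
    unfolding av_mult using av_gchoose_le_1_if_in_Zp[OF that] B[OF diff_of_nat_in_Zp[OF that]]
    by (intro mult_mono mult_right_le_one_le) simp_all
  moreover have "(\<lambda>n. av (mahler \<psi> n) * B) \<longlonglongrightarrow> 0"
    using \<psi> by (rule tendsto_mult_left_zero)
  moreover have "cont_along_nat av (\<lambda>z. mahler \<psi> n * (z gchoose n) * \<phi> (z - of_nat n)) x" for n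
    using assms(1,2)
    by (intro cont_along_nat_mult cont_along_nat_const cont_along_nat_gchoose cont_along_nat_comp_diff)
  ultimately show ?thesis
    unfolding mu_def using assms(2) by (intro cont_along_nat_vsum)
qed

lemma cont_along_nat_conv:
  assumes "cont_Zp av \<phi>" "x \<in> Zp av" and \<psi>: "(\<lambda>n. av (mahler \<psi> n)) \<longlonglongrightarrow> 0"
  shows "cont_along_nat av (conv av \<psi> \<phi>) x"
proof -
  let ?c = "binomial_conv (mahler \<psi>) (mahler \<phi>)"
  have "av (?c n * (z gchoose n)) \<le> av (?c n)" if "z \<in> Zp av" for z n
    unfolding av_mult using av_gchoose_le_1_if_in_Zp[OF that] by (simp add: mult_left_le)
  moreover have "(\<lambda>n. av (?c n)) \<longlonglongrightarrow> 0"
    using \<psi> mahler_tendsto_zero[OF assms(1)] by (rule binomial_conv_tendsto_zero)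
  moreover have "cont_along_nat av (\<lambda>z. ?c n * (z gchoose n)) x" for n
    using assms(2) by (intro cont_along_nat_mult cont_along_nat_const cont_along_nat_gchoose)
  ultimately have "cont_along_nat av (\<lambda>z. vsum av (\<lambda>n. ?c n * (z gchoose n))) x"
    using assms(2) by (intro cont_along_nat_vsum)
  moreover have "conv av \<psi> \<phi> = (\<lambda>z. vsum av (\<lambda>n. ?c n * (z gchoose n)))"
    by (simp add: conv_def binomial_conv_def)
  ultimately show ?thesis
    by simp
qed

theorem mu_eq_conv:
  assumes "cont_Zp av \<phi>" "x \<in> Zp av" "(\<lambda>n. av (mahler \<psi> n)) \<longlonglongrightarrow> 0"
  shows "mu av \<phi> x \<psi> = conv av \<psi> \<phi> x"
  using assms(2) cont_along_nat_mu[OF assms] cont_along_nat_conv[OF assms] mu_eq_conv_of_nat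
  by (rule cont_along_nat_eq)

end

lemma complete_padic_field_if_is_Cp: "is_Cp p av \<Longrightarrow> complete_padic_field av p"
  by (simp add: is_Cp_def complete_padic_field_def complete_padic_field_axioms_def nonarch_field_def)

theorem proposition6p8:
  fixes p :: nat and av :: "'a::field_char_0 \<Rightarrow> real"
    and \<phi> :: "'a \<Rightarrow> 'a" and x y :: 'a
  assumes "is_Cp p av"
    and "cont_Zp av \<phi>"
    and "x \<in> Zp av" and "y \<in> Zp av"
  shows "T_op av x \<phi> y = mu av \<phi> x (one_minus_x_pow av y)
       \<and> mu av \<phi> x (one_minus_x_pow av y) = conv av (one_minus_x_pow av y) \<phi> x"
proof -
  interpret complete_padic_field av p
    using assms(1) by (rule complete_padic_field_if_is_Cp)
  show ?thesis
    using T_op_eq_mu mu_eq_conv[OF assms(2,3) mahler_one_minus_x_pow_tendsto_zero[OF assms(4)]] by simp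
qed

end
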